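(* Let $\alpha>1$ be an irrational number of finite type $\tau$ and $\beta\in\mathbb{R}$. For every sufficiently small $\epsilon>0$ there is a constant $C=C(\alpha,\beta,\epsilon)$ such that for every integer $d\ge1$ and every $N\ge1$, \[ \left|\#\{n\le N:\ d\mid n,\ n\in\mathcal{B}_{\alpha,\beta}\}-\frac{N}{\alpha d}\right|\le C\,N^{\frac{\tau}{1+\tau}+\epsilon}. \]
   Context: The type of an irrational $\alpha$ is $\tau(\alpha)=\sup\{t\in\mathbb{R}:\liminf_{n\to\infty} n^t\|\alpha n\|=0\}$, where $\|\cdot\|$ is the distance to the nearest integer; finite type means $\tau<\infty$ (one always has $\tau\ge1$). The Beatty sequence is $\mathcal{B}_{\alpha,\beta}=([\alpha n+\beta])_{n=1}^\infty$, with $[\cdot]$ the integer part. *)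

theory Defs
  imports "HOL-Analysis.Analysis"
begin

definition nint_dist :: "real \<Rightarrow> real" where
  "nint_dist x = \<bar>x - of_int (round x)\<bar>"

definition irr_type :: "real \<Rightarrow> ereal" where
  "irr_type \<alpha> = Sup {ereal t | t. Liminf sequentially
      (\<lambda>n::nat. ereal (real n powr t * nint_dist (\<alpha> * real n))) = 0}"

definition beatty :: "real \<Rightarrow> real \<Rightarrow> int set" where
  "beatty \<alpha> \<beta> = {\<lfloor>\<alpha> * real n + \<beta>\<rfloor> | n::nat. n \<ge> 1}"

end

(*
  For D > beta, D = [alpha m + beta] for some m >= 1 iff the interval
  [(D - beta)/alpha, (D + 1 - beta)/alpha), of length 1/alpha < 1, contains an integer.
  So the indicator of D in the Beatty sequence is
  ceil((D + 1 - beta)/alpha) - ceil((D - beta)/alpha) = 1/alpha + {(beta - D - 1)/alpha} - {(beta - D)/alpha}.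
  Summing over D = d k with k <= K = N div d, the count is N/(alpha d) + O(1 + |beta|) plus the
  difference of two sums of K fractional parts along a progression with step -d/alpha, each of
  which is K/2 up to its discrepancy.

  If |q theta - p| <= 1/q with p, q coprime, a sum of K fractional parts along a progression
  with step theta splits into K/q blocks of q terms, each q/2 + O(1) because j p runs through all
  residues mod q; the error is O(K/q + q).  Dirichlet's theorem for theta = d/alpha with
  Q ~ N^(t/(1+t)) gives q <= Q, while the finite type of alpha (hence of 1/alpha), in the form
  |m/alpha - p| >= c m^(-t) for some t > tau, forces q d > c' N^(1/(1+t)).  As d K <= N this makes
  K/q = O(N^(t/(1+t))) uniformly in d.
*)
theory Submission
  imports Defs
begin

section \<open>Diophantine lower bounds\<close>

definition approx_lower_bound :: "real \<Rightarrow> real \<Rightarrow> real \<Rightarrow> bool" where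
  "approx_lower_bound c t \<gamma> \<longleftrightarrow>
     (\<forall>m::nat. \<forall>p::int. m \<ge> 1 \<longrightarrow> c * real m powr (- t) \<le> \<bar>real m * \<gamma> - of_int p\<bar>)"

lemma nint_dist_mult_pos:
  assumes "\<alpha> \<notin> \<rat>" and "n \<ge> 1"
  shows "nint_dist (\<alpha> * real n) > 0"
proof (rule ccontr)
  assume "\<not> nint_dist (\<alpha> * real n) > 0"
  then have "\<alpha> = of_int (round (\<alpha> * real n)) / real n"
    using assms(2) by (simp add: nint_dist_def field_simps)
  then have "\<alpha> \<in> \<rat>"
    by (metis Rats_divide Rats_of_int Rats_of_nat)
  with assms(1) show False ..
qed

lemma eventually_nint_dist_gt_of_irr_type:
  assumes "irr_type \<alpha> = ereal \<tau>" and "\<tau> < t"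
  shows "\<exists>c > 0. \<forall>\<^sub>F n in sequentially. c < real n powr t * nint_dist (\<alpha> * real n)"
proof -
  define f where "f n = ereal (real n powr t * nint_dist (\<alpha> * real n))" for n :: nat
  have "Liminf sequentially f \<noteq> 0"
  proof
    assume "Liminf sequentially f = 0"
    then have "ereal t \<le> irr_type \<alpha>"
      unfolding irr_type_def f_def by (blast intro: Sup_upper)
    with assms show False by simp
  qed
  moreover have "0 \<le> Liminf sequentially f"
    by (rule Liminf_bounded) (auto simp: f_def nint_dist_def)
  ultimately obtain c where "0 < ereal c" "ereal c < Liminf sequentially f"
    using ereal_dense2 by (metis order_le_less)
  then show ?thesis
    using less_LiminfD[of "ereal c" sequentially f] by (auto simp: f_def)
qed

lemma approx_lower_bound_of_irr_type:
  assumes irr: "\<alpha> \<notin> \<rat>" and "irr_type \<alpha> = ereal \<tau>" and "\<tau> < t"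
  shows "\<exists>c > 0. approx_lower_bound c t \<alpha>"
proof -
  define g where "g n = real n powr t * nint_dist (\<alpha> * real n)" for n :: nat
  obtain c0 n0 where c0: "c0 > 0" and n0: "\<And>n. n \<ge> n0 \<Longrightarrow> c0 < g n"
    using eventually_nint_dist_gt_of_irr_type[OF assms(2,3)]
    unfolding eventually_sequentially g_def by blast
  define c where "c = Min (insert c0 (g ` {1..<n0}))"
  have "c > 0"
    unfolding c_def using c0 nint_dist_mult_pos[OF irr] by (auto simp: g_def)
  moreover have "c * real m powr (- t) \<le> \<bar>real m * \<alpha> - of_int p\<bar>" if m: "m \<ge> 1" for m p
  proof -
    have "c \<le> g m"
    proof (cases "m < n0")
      case True
      with m show ?thesis
        unfolding c_def by (intro Min_le) auto
    next
      case False
      have "c \<le> c0"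
        unfolding c_def by (intro Min_le) auto
      with False show ?thesis
        using n0[of m] by simp
    qed
    then have "c * real m powr (- t) \<le> nint_dist (\<alpha> * real m)"
      using m by (simp add: g_def powr_minus field_simps)
    also have "\<dots> \<le> \<bar>real m * \<alpha> - of_int p\<bar>"
      unfolding nint_dist_def by (metis mult.commute round_diff_minimal)
    finally show ?thesis .
  qed
  ultimately show ?thesis
    unfolding approx_lower_bound_def by blast
qed

lemma irr_type_nonneg:
  assumes irr: "\<alpha> \<notin> \<rat>" and "irr_type \<alpha> = ereal \<tau>"
  shows "\<tau> \<ge> 0"
proof (rule ccontr)
  assume "\<not> \<tau> \<ge> 0"
  then obtain c where c: "c > 0" and bound: "approx_lower_bound c (\<tau> / 2) \<alpha>"
    using approx_lower_bound_of_irr_type[OF assms, of "\<tau> / 2"] by auto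
  define M where "M = nat \<lceil>1 / c\<rceil> + 1"
  have "M > 0" "1 / c < real M"
    unfolding M_def by linarith+
  then have "1 / real M < c"
    using c by (simp add: field_simps)
  obtain h k where "0 < k" and approx: "\<bar>of_int k * \<alpha> - of_int h\<bar> < 1 / M"
    using Dirichlet_approx[OF \<open>M > 0\<close>] by blast
  then have k: "nat k \<ge> 1" "real (nat k) = of_int k"
    by auto
  have "1 \<le> real (nat k) powr (- (\<tau> / 2))"
    using k \<open>\<not> \<tau> \<ge> 0\<close> by (intro ge_one_powr_ge_zero) auto
  then have "c \<le> c * real (nat k) powr (- (\<tau> / 2))"
    using c by simp
  also have "\<dots> \<le> \<bar>real (nat k) * \<alpha> - of_int h\<bar>"
    using bound k unfolding approx_lower_bound_def by blast
  finally show False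
    using approx k \<open>1 / real M < c\<close> by simp
qed

lemma approx_lower_bound_uminus:
  assumes "approx_lower_bound c t \<gamma>"
  shows "approx_lower_bound c t (- \<gamma>)"
proof -
  have "\<bar>real m * (- \<gamma>) - of_int p\<bar> = \<bar>real m * \<gamma> - of_int (- p)\<bar>" for m p
    by (simp add: abs_minus_commute)
  with assms show ?thesis
    unfolding approx_lower_bound_def by presburger
qed

lemma approx_lower_bound_inverse:
  fixes \<alpha> c t :: real
  assumes \<alpha>: "\<alpha> > 0" and t: "t \<ge> 0" and c: "c > 0" and bound: "approx_lower_bound c t \<alpha>"
  shows "\<exists>c' > 0. approx_lower_bound c' t (1 / \<alpha>)"
proof -
  define K where "K = 1 + 2 / \<alpha>"
  define c' where "c' = min c 1 * K powr (- t) / \<alpha>"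
  have "K \<ge> 1"
    using \<alpha> by (simp add: K_def)
  then have K: "K \<ge> 1" "K powr (- t) \<le> 1"
    using t powr_mono[of "- t" 0 K] by auto
  have "c' > 0"
    using c \<alpha> K by (simp add: c'_def)
  moreover have "c' * real m powr (- t) \<le> \<bar>real m * (1 / \<alpha>) - of_int p\<bar>" if m: "m \<ge> 1" for m :: nat and p :: int
  proof (cases "\<bar>real m * (1 / \<alpha>) - of_int p\<bar> < 1 / \<alpha>")
    case False
    have "real m powr (- t) \<le> 1"
      using m t powr_mono[of "- t" 0 "real m"] by simp
    then have "min c 1 * K powr (- t) * real m powr (- t) \<le> 1"
      using K by (intro mult_le_one) auto
    with False \<alpha> show ?thesis
      by (simp add: c'_def field_simps)
  next
    case True
    then have "real m - 1 < \<alpha> * p" "\<alpha> * p < real m + 1"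
      using \<alpha> by (auto simp: abs_less_iff field_simps)
    moreover have "\<alpha> * (K * real m) = \<alpha> * real m + 2 * real m"
      using \<alpha> by (simp add: K_def algebra_simps)
    moreover have "real m \<ge> 1" "\<alpha> * real m \<ge> 0"
      using m \<alpha> by auto
    ultimately have "\<alpha> * p > 0" "\<alpha> * p \<le> \<alpha> * (K * real m)"
      by linarith+
    then have p: "p \<ge> 1" "real_of_int p \<le> K * real m"
      using \<alpha> by (auto simp: zero_less_mult_iff)
    have "K powr (- t) * real m powr (- t) \<le> real (nat p) powr (- t)"
      using p t m K by (auto simp: powr_mult[symmetric] intro!: powr_mono2')
    then have "min c 1 * (K powr (- t) * real m powr (- t)) \<le> c * real (nat p) powr (- t)"
      using c K by (intro mult_mono) auto
    also have "\<dots> \<le> \<bar>real (nat p) * \<alpha> - of_int (int m)\<bar>"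
      using bound \<open>p \<ge> 1\<close> unfolding approx_lower_bound_def
      by (metis nat_one_as_int nat_mono)
    also have "\<dots> = \<alpha> * \<bar>real m * (1 / \<alpha>) - of_int p\<bar>"
      using \<alpha> p by (simp add: abs_minus_commute field_simps flip: abs_mult_pos)
    finally show ?thesis
      using \<alpha> by (simp add: c'_def field_simps)
  qed
  ultimately show ?thesis
    unfolding approx_lower_bound_def by blast
qed

lemma approx_lower_bound_imp_large_denominator:
  assumes bound: "approx_lower_bound c t \<gamma>" and m: "m \<ge> 1"
    and approx: "\<bar>real m * \<gamma> - of_int p\<bar> < 1 / Q"
  shows "c * Q < real m powr t"
proof -
  have "0 < 1 / Q"
    using approx abs_ge_zero[of "real m * \<gamma> - of_int p"] by linarith
  then have "Q > 0"
    by simp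
  have "c * real m powr (- t) \<le> \<bar>real m * \<gamma> - of_int p\<bar>"
    using bound m unfolding approx_lower_bound_def by blast
  then have "c \<le> real m powr t * \<bar>real m * \<gamma> - of_int p\<bar>"
    using m by (simp add: powr_minus field_simps)
  also have "\<dots> < real m powr t * (1 / Q)"
    using approx m by (intro mult_strict_left_mono) auto
  finally show ?thesis
    using \<open>Q > 0\<close> by (simp add: field_simps)
qed

section \<open>Sums of fractional parts along arithmetic progressions\<close>

lemma bij_betw_affine_mod:
  fixes p m :: int and q :: nat
  assumes q: "q > 0" and cop: "coprime p (int q)"
  shows "bij_betw (\<lambda>j. nat ((int j * p + m) mod int q)) {..<q} {..<q}"
proof -
  define r where "r = (\<lambda>j::nat. nat ((int j * p + m) mod int q))"
  have into: "r ` {..<q} \<subseteq> {..<q}"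
    using q by (auto simp: r_def nat_less_iff)
  have "inj_on r {..<q}"
  proof
    fix x y assume "x \<in> {..<q}" "y \<in> {..<q}" and "r x = r y"
    then have "(int x * p + m) mod int q = (int y * p + m) mod int q"
      using q by (simp add: r_def nat_eq_iff2)
    then have "int q dvd (int x * p + m) - (int y * p + m)"
      by (simp only: mod_eq_dvd_iff)
    then have "int q dvd (int x - int y) * p"
      by (simp add: algebra_simps)
    then have "int q dvd int x - int y"
      using cop by (simp add: coprime_commute coprime_dvd_mult_left_iff)
    moreover have "\<bar>int x - int y\<bar> < int q"
      using \<open>x \<in> {..<q}\<close> \<open>y \<in> {..<q}\<close> by auto
    ultimately have "int x - int y = 0"
      using dvd_imp_le_int[of "int x - int y" "int q"] by auto
    then show "x = y" by simp
  qed
  with into show ?thesis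
    unfolding r_def[symmetric] bij_betw_def by (simp add: endo_inj_surj)
qed

lemma sum_frac_coprime_progression:
  fixes p :: int and q :: nat and c :: real
  assumes q: "q > 0" and cop: "coprime p (int q)"
  shows "(\<Sum>j<q. frac (c + real j * p / q)) = (real q - 1) / 2 + frac (real q * c)"
proof -
  define m where "m = \<lfloor>real q * c\<rfloor>"
  define u where "u = frac (real q * c) / q"
  have u: "0 \<le> u" "u < 1 / q"
    using q by (auto simp: u_def frac_lt_1 divide_strict_right_mono)
  have frac_term: "frac (c + real j * p / q) = u + real (nat ((int j * p + m) mod int q)) / q" for j
  proof -
    define r where "r = (int j * p + m) mod int q"
    have r: "0 \<le> r" "r < int q" using q by (auto simp: r_def)
    have "c + real j * p / q = (u + r / q) + of_int ((int j * p + m) div int q)"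
    proof -
      have "real_of_int (int j * p + m) = of_int ((int j * p + m) div int q * int q + r)"
        by (simp add: r_def)
      then show ?thesis
        using q by (simp add: u_def m_def frac_def field_simps)
    qed
    moreover have "u + r / q < 1"
    proof -
      have "real_of_int r \<le> real q - 1" using r by linarith
      then show ?thesis using u q by (simp add: field_simps)
    qed
    ultimately show ?thesis
      using u r by (simp add: r_def)
  qed
  have "(\<Sum>j<q. real (nat ((int j * p + m) mod int q))) = (\<Sum>i<q. real i)"
    by (rule sum.reindex_bij_betw[OF bij_betw_affine_mod[OF q cop]])
  also have "\<dots> = real q * (real q - 1) / 2"
    by (induction q) (auto simp: field_simps)
  finally have "(\<Sum>j<q. real (nat ((int j * p + m) mod int q))) / q = (real q - 1) / 2"
    using q by simp
  moreover have "real q * u = frac (real q * c)"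
    using q by (simp add: u_def)
  moreover have "(\<Sum>j<q. frac (c + real j * p / q))
      = real q * u + (\<Sum>j<q. real (nat ((int j * p + m) mod int q))) / q"
    unfolding frac_term sum.distrib sum_divide_distrib by simp
  ultimately show ?thesis
    by linarith
qed

lemma frac_bounds_of_dist_le:
  fixes x y \<delta> :: real
  assumes "\<bar>x - y\<bar> \<le> \<delta>"
  shows "frac (y + \<delta>) - 2 * \<delta> \<le> frac x" and "frac x \<le> frac (y - \<delta>) + 2 * \<delta>"
proof -
  have "\<lfloor>x\<rfloor> \<le> \<lfloor>y + \<delta>\<rfloor>" and "\<lfloor>y - \<delta>\<rfloor> \<le> \<lfloor>x\<rfloor>"
    using assms by (intro floor_mono; linarith)+
  then show "frac (y + \<delta>) - 2 * \<delta> \<le> frac x" and "frac x \<le> frac (y - \<delta>) + 2 * \<delta>"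
    using assms unfolding frac_def by linarith+
qed

lemma sum_frac_progression_near_rational:
  fixes \<theta> c :: real and p :: int and q :: nat
  assumes q: "q > 0" and cop: "coprime p (int q)" and approx: "\<bar>q * \<theta> - p\<bar> \<le> 1 / q"
  shows "\<bar>(\<Sum>j<q. frac (c + real j * \<theta>)) - q / 2\<bar> \<le> 5 / 2"
proof -
  have close: "\<bar>(c + real j * \<theta>) - (c + real j * p / q)\<bar> \<le> 1 / q" if "j < q" for j
  proof -
    have "(c + real j * \<theta>) - (c + real j * p / q) = real j * (q * \<theta> - p) / q"
      using q by (simp add: field_simps)
    then have "\<bar>(c + real j * \<theta>) - (c + real j * p / q)\<bar> = real j * \<bar>q * \<theta> - p\<bar> / q"
      by (simp add: abs_mult)
    also have "\<dots> \<le> real q * (1 / q) / q"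
      using that approx by (intro divide_right_mono mult_mono) auto
    finally show ?thesis using q by simp
  qed
  have "(\<Sum>j<q. frac ((c + 1 / q) + real j * p / q) - 2 / q) \<le> (\<Sum>j<q. frac (c + real j * \<theta>))"
    using frac_bounds_of_dist_le(1)[OF close] by (intro sum_mono) (simp add: add_ac)
  then have lower: "(real q - 1) / 2 + frac (real q * (c + 1 / q)) - 2 \<le> (\<Sum>j<q. frac (c + real j * \<theta>))"
    using q by (simp add: sum_subtractf sum_frac_coprime_progression[OF q cop])
  have "(\<Sum>j<q. frac (c + real j * \<theta>)) \<le> (\<Sum>j<q. frac ((c - 1 / q) + real j * p / q) + 2 / q)"
    using frac_bounds_of_dist_le(2)[OF close] by (intro sum_mono) (simp add: algebra_simps)
  then have upper: "(\<Sum>j<q. frac (c + real j * \<theta>)) \<le> (real q - 1) / 2 + frac (real q * (c - 1 / q)) + 2"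
    using q by (simp add: sum.distrib sum_frac_coprime_progression[OF q cop])
  have "real q * (c + 1 / q) = real q * c + 1" "real q * (c - 1 / q) = real q * c - 1"
    using q by (simp_all add: field_simps)
  then have "frac (real q * (c + 1 / q)) = frac (real q * c)" "frac (real q * (c - 1 / q)) = frac (real q * c)"
    by (simp_all add: frac_def)
  moreover have "0 \<le> frac (real q * c)" "frac (real q * c) < 1"
    by (simp_all add: frac_lt_1)
  ultimately show ?thesis
    using lower upper unfolding abs_le_iff diff_divide_distrib by linarith
qed

lemma sum_frac_progression_discrepancy:
  fixes \<theta> a :: real and p :: int and q K :: nat
  assumes q: "q > 0" and cop: "coprime p (int q)" and approx: "\<bar>q * \<theta> - p\<bar> \<le> 1 / q"
  shows "\<bar>(\<Sum>k<K. frac (a + real k * \<theta>)) - K / 2\<bar> \<le> 5 / 2 * (K / q) + q / 2"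
proof -
  define f where "f k = frac (a + real k * \<theta>) - 1 / 2" for k
  define B where "B = K div q"
  have block: "\<bar>sum f {b * q..<b * q + q}\<bar> \<le> 5 / 2" for b
  proof -
    have "sum f {b * q..<b * q + q} = (\<Sum>j<q. frac ((a + real (b * q) * \<theta>) + real j * \<theta>)) - q / 2"
      by (simp add: sum.atLeastLessThan_shift_0 atLeast0LessThan f_def sum_subtractf algebra_simps)
    then show ?thesis
      using sum_frac_progression_near_rational[OF q cop approx] by simp
  qed
  have "\<bar>sum f {..<B * q}\<bar> \<le> 5 / 2 * B"
  proof -
    have "\<bar>sum f {..<B * q}\<bar> = \<bar>\<Sum>b<B. sum f {b * q..<b * q + q}\<bar>"
      by (simp flip: sum.nat_group)
    also have "\<dots> \<le> (\<Sum>b<B. \<bar>sum f {b * q..<b * q + q}\<bar>)"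
      by (rule sum_abs)
    also have "\<dots> \<le> (\<Sum>b<B. 5 / 2)"
      by (intro sum_mono block)
    finally show ?thesis by simp
  qed
  moreover have "\<bar>sum f {B * q..<K}\<bar> \<le> q / 2"
  proof -
    have "\<bar>f k\<bar> \<le> 1 / 2" for k
      unfolding f_def using frac_ge_0[of "a + real k * \<theta>"] frac_lt_1[of "a + real k * \<theta>"] by linarith
    then have "\<bar>sum f {B * q..<K}\<bar> \<le> real (K - B * q) / 2"
      using order_trans[OF sum_abs sum_bounded_above[of "{B * q..<K}" "\<lambda>k. \<bar>f k\<bar>" "1 / 2"]] by simp
    moreover have "K - B * q < q"
      using q by (simp add: B_def minus_div_mult_eq_mod)
    ultimately show ?thesis by linarith
  qed
  moreover have "sum f {..<K} = sum f {..<B * q} + sum f {B * q..<K}"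
    using sum.atLeastLessThan_concat[of 0 "B * q" K f]
    by (simp add: B_def atLeast0LessThan)
  moreover have "sum f {..<K} = (\<Sum>k<K. frac (a + real k * \<theta>)) - K / 2"
    by (simp add: f_def sum_subtractf)
  moreover have "real B \<le> K / q"
    using q by (simp add: B_def of_nat_div_le_of_nat)
  ultimately show ?thesis
    by linarith
qed

lemma sum_frac_multiple_progression_discrepancy:
  fixes \<gamma> c t :: real
  assumes t: "t > 0" and c: "c > 0" and \<gamma>: "approx_lower_bound c t \<gamma>"
  obtains C where "\<And>d N K a. d \<ge> 1 \<Longrightarrow> N \<ge> 1 \<Longrightarrow> d * K \<le> N \<Longrightarrow>
    \<bar>(\<Sum>k<K. frac (a + real k * (real d * \<gamma>))) - K / 2\<bar> \<le> C * real N powr (t / (1 + t))"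
proof -
  define \<kappa> where "\<kappa> = c powr (1 / t)"
  have \<kappa>: "\<kappa> > 0" "\<kappa> powr t = c"
    using c t by (simp_all add: \<kappa>_def powr_powr)
  show thesis
  proof (rule that)
    fix d N K :: nat and a :: real
    assume d: "d \<ge> 1" and N: "N \<ge> 1" and dK: "d * K \<le> N"
    define E where "E = real N powr (t / (1 + t))"
    define s where "s = real N powr (1 / (1 + t))"
    have E: "E \<ge> 1"
      unfolding E_def using N t by (simp add: ge_one_powr_ge_zero)
    have s: "s > 0" "s * E = N" "s powr t = E"
      using N t by (simp_all add: s_def E_def powr_powr flip: powr_add add_divide_distrib)
    \<comment> \<open>Q balances the two error terms K/q and q of the block decomposition.\<close>
    define Q where "Q = nat \<lceil>E\<rceil>"
    have Q: "E \<le> Q" "real Q < E + 1" "Q > 0"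
      unfolding Q_def using E by linarith+
    obtain h k where cop: "coprime h k" and k: "0 < k" "k \<le> int Q"
      and approx: "\<bar>of_int k * (real d * \<gamma>) - of_int h\<bar> < 1 / Q"
      using Dirichlet_approx_coprime[OF \<open>Q > 0\<close>] by blast
    define q where "q = nat k"
    have q: "q > 0" "q \<le> Q" "k = int q"
      using k by (auto simp: q_def)
    have "q * d \<ge> 1"
      using q d by simp
    from approx_lower_bound_imp_large_denominator[OF \<gamma> this, of h Q]
    have "c * real Q < real (q * d) powr t"
      using approx q by (simp add: mult.assoc)
    have "\<kappa> * s < real (q * d)"
    proof (rule ccontr)
      assume "\<not> \<kappa> * s < real (q * d)"
      then have "real (q * d) powr t \<le> (\<kappa> * s) powr t"
        using t by (intro powr_mono2) auto
      also have "\<dots> = c * E"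
        using \<kappa> s by (simp add: powr_mult)
      finally show False
        using \<open>c * real Q < real (q * d) powr t\<close> Q c by (smt (verit) mult_left_mono)
    qed
    then have "real K / q \<le> E / \<kappa>"
    proof -
      have "real K / q = real (d * K) / real (q * d)"
        using d by simp
      also have "\<dots> \<le> real N / (\<kappa> * s)"
        using of_nat_mono[OF dK] \<kappa> s \<open>\<kappa> * s < real (q * d)\<close> by (intro frac_le) auto
      also have "\<dots> = E / \<kappa>"
        using \<kappa> s by (simp flip: s(2))
      finally show ?thesis .
    qed
    have "\<bar>(\<Sum>k<K. frac (a + real k * (real d * \<gamma>))) - K / 2\<bar> \<le> 5 / 2 * (K / q) + q / 2"
    proof (rule sum_frac_progression_discrepancy[OF \<open>q > 0\<close>])
      show "coprime h (int q)" using cop q by simp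
      have "1 / real Q \<le> 1 / real q" using q by (simp add: frac_le)
      then show "\<bar>real q * (real d * \<gamma>) - h\<bar> \<le> 1 / q"
        using approx q by simp
    qed
    also have "\<dots> \<le> 5 / 2 * (E / \<kappa>) + E"
      using \<open>real K / q \<le> E / \<kappa>\<close> Q q E by linarith
    finally show "\<bar>(\<Sum>k<K. frac (a + real k * (real d * \<gamma>))) - K / 2\<bar> \<le> (5 / (2 * \<kappa>) + 1) * real N powr (t / (1 + t))"
      by (simp add: E_def algebra_simps)
  qed
qed

section \<open>Multiples of d in a Beatty sequence\<close>

lemma ceiling_diff_eq_of_bool:
  fixes a b :: real
  assumes "a \<le> b" and "b \<le> a + 1"
  shows "\<lceil>b\<rceil> - \<lceil>a\<rceil> = of_bool (of_int \<lceil>a\<rceil> < b)"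
proof (cases "of_int \<lceil>a\<rceil> < b")
  case True
  then have "\<lceil>a\<rceil> < \<lceil>b\<rceil>"
    by (meson le_of_int_ceiling less_le_trans of_int_less_iff)
  moreover have "b \<le> of_int \<lceil>a\<rceil> + 1"
    using assms(2) le_of_int_ceiling[of a] by linarith
  then have "\<lceil>b\<rceil> \<le> \<lceil>a\<rceil> + 1"
    by (simp add: ceiling_le_iff)
  ultimately show ?thesis
    using True by simp
next
  case False
  then have "\<lceil>b\<rceil> \<le> \<lceil>a\<rceil>"
    by (simp add: ceiling_le_iff)
  moreover have "\<lceil>a\<rceil> \<le> \<lceil>b\<rceil>"
    using assms(1) by (rule ceiling_mono)
  ultimately show ?thesis
    using False by simp
qed

lemma of_int_ceiling_diff_eq_frac:
  fixes a b :: real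
  shows "real_of_int (\<lceil>b\<rceil> - \<lceil>a\<rceil>) = b - a + frac (- b) - frac (- a)"
  by (simp add: ceiling_def frac_def)

lemma mem_beatty_iff_ceiling:
  fixes \<alpha> \<beta> :: real and D :: int
  assumes \<alpha>: "\<alpha> > 0" and D: "\<beta> < D"
  shows "D \<in> beatty \<alpha> \<beta> \<longleftrightarrow> of_int \<lceil>(D - \<beta>) / \<alpha>\<rceil> < (D + 1 - \<beta>) / \<alpha>"
proof -
  have floor_iff: "\<lfloor>\<alpha> * m + \<beta>\<rfloor> = D \<longleftrightarrow> (D - \<beta>) / \<alpha> \<le> m \<and> m < (D + 1 - \<beta>) / \<alpha>" for m :: real
    using \<alpha> by (simp add: floor_eq_iff pos_divide_le_eq pos_less_divide_eq algebra_simps)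
  show ?thesis
  proof
    assume "D \<in> beatty \<alpha> \<beta>"
    then obtain n :: nat where "\<lfloor>\<alpha> * real n + \<beta>\<rfloor> = D"
      unfolding beatty_def by auto
    then have "\<lceil>(D - \<beta>) / \<alpha>\<rceil> \<le> int n" "real n < (D + 1 - \<beta>) / \<alpha>"
      unfolding floor_iff by (auto simp: ceiling_le_iff)
    then show "of_int \<lceil>(D - \<beta>) / \<alpha>\<rceil> < (D + 1 - \<beta>) / \<alpha>"
      by linarith
  next
    assume upper: "of_int \<lceil>(D - \<beta>) / \<alpha>\<rceil> < (D + 1 - \<beta>) / \<alpha>"
    define m where "m = \<lceil>(D - \<beta>) / \<alpha>\<rceil>"
    have "m > 0"
      using \<alpha> D by (simp add: m_def)
    moreover have "\<lfloor>\<alpha> * real (nat m) + \<beta>\<rfloor> = D"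
      using \<open>m > 0\<close> upper unfolding floor_iff by (simp add: m_def)
    ultimately show "D \<in> beatty \<alpha> \<beta>"
      unfolding beatty_def by (intro CollectI exI[of _ "nat m"]) auto
  qed
qed

lemma beatty_indicator_eq_ceiling_diff:
  fixes \<alpha> \<beta> :: real and D :: int
  assumes "\<alpha> \<ge> 1" and "\<beta> < D"
  shows "of_bool (D \<in> beatty \<alpha> \<beta>) = \<lceil>(D + 1 - \<beta>) / \<alpha>\<rceil> - \<lceil>(D - \<beta>) / \<alpha>\<rceil>"
proof -
  have "(D + 1 - \<beta>) / \<alpha> = (D - \<beta>) / \<alpha> + 1 / \<alpha>" and "1 / \<alpha> \<le> 1"
    using assms by (auto simp: diff_divide_distrib add_divide_distrib)
  then show ?thesis
    using assms by (subst ceiling_diff_eq_of_bool) (auto simp: mem_beatty_iff_ceiling)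
qed

lemma card_nat_le_real_bound:
  fixes \<beta> :: real
  shows "real (card {k \<in> {1..K}. real k \<le> \<beta>}) \<le> \<bar>\<beta>\<bar>"
proof -
  have "card {k \<in> {1..K}. real k \<le> \<beta>} \<le> card {1..nat \<lfloor>\<beta>\<rfloor>}"
    by (intro card_mono) (auto simp: le_nat_iff le_floor_iff)
  then have "real (card {k \<in> {1..K}. real k \<le> \<beta>}) \<le> real (nat \<lfloor>\<beta>\<rfloor>)"
    by simp
  also have "\<dots> \<le> \<bar>\<beta>\<bar>"
    by (cases "\<beta> \<ge> 0") auto
  finally show ?thesis .
qed

lemma card_beatty_multiples:
  assumes "d \<ge> 1"
  shows "card {n::nat. 1 \<le> n \<and> n \<le> N \<and> d dvd n \<and> int n \<in> beatty \<alpha> \<beta>}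
       = card {k \<in> {1..N div d}. int (d * k) \<in> beatty \<alpha> \<beta>}"
proof -
  have "{n::nat. 1 \<le> n \<and> n \<le> N \<and> d dvd n \<and> int n \<in> beatty \<alpha> \<beta>}
      = (\<lambda>k. d * k) ` {k \<in> {1..N div d}. int (d * k) \<in> beatty \<alpha> \<beta>}"
    using assms by (auto simp: less_eq_div_iff_mult_less_eq mult.commute elim!: dvdE intro!: image_eqI)
  moreover have "inj_on (\<lambda>k. d * k) A" for A
    using assms by (auto simp: inj_on_def)
  ultimately show ?thesis
    by (simp add: card_image)
qed

lemma beatty_multiples_count_approx:
  fixes \<alpha> \<beta> :: real and d K :: nat
  assumes \<alpha>: "\<alpha> \<ge> 1" and d: "d \<ge> 1"
  shows "\<bar>real (card {k \<in> {1..K}. int (d * k) \<in> beatty \<alpha> \<beta>})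
           - (K / \<alpha> + (\<Sum>k<K. frac ((\<beta> - d - 1) / \<alpha> + real k * (real d * - (1 / \<alpha>))))
                     - (\<Sum>k<K. frac ((\<beta> - d) / \<alpha> + real k * (real d * - (1 / \<alpha>)))))\<bar> \<le> \<bar>\<beta>\<bar>"
proof -
  define g where "g k = real_of_int (\<lceil>(real (d * k) + 1 - \<beta>) / \<alpha>\<rceil> - \<lceil>(real (d * k) - \<beta>) / \<alpha>\<rceil>)" for k
  have g_of_bool: "\<exists>P. g k = of_bool P" for k
  proof -
    have "(real (d * k) + 1 - \<beta>) / \<alpha> = (real (d * k) - \<beta>) / \<alpha> + 1 / \<alpha>" "1 / \<alpha> \<le> 1"
      using \<alpha> by (auto simp: diff_divide_distrib add_divide_distrib)
    then show ?thesis
      using \<alpha> unfolding g_def by (subst ceiling_diff_eq_of_bool) auto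
  qed
  \<comment> \<open>The ceiling difference also counts indices m \<le> 0, which occur only when d k \<le> \<beta>.\<close>
  have term_err: "\<bar>of_bool (int (d * k) \<in> beatty \<alpha> \<beta>) - g k\<bar> \<le> of_bool (real k \<le> \<beta>)" for k
  proof (cases "real k \<le> \<beta>")
    case True
    then show ?thesis
      using g_of_bool[of k] by auto
  next
    case False
    moreover have "real k \<le> real (d * k)"
      using d by (simp only: of_nat_le_iff) simp
    ultimately have "\<beta> < real_of_int (int (d * k))"
      by simp
    from arg_cong[OF beatty_indicator_eq_ceiling_diff[OF \<alpha> this], of real_of_int]
    have "of_bool (int (d * k) \<in> beatty \<alpha> \<beta>) = g k"
      by (simp add: g_def)
    with False show ?thesis
      by simp
  qed
  have "real (card {k \<in> {1..K}. int (d * k) \<in> beatty \<alpha> \<beta>}) = (\<Sum>k\<in>{1..K}. of_bool (int (d * k) \<in> beatty \<alpha> \<beta>))"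
    by (simp add: Int_def)
  moreover have "(\<Sum>k\<in>{1..K}. g k) = K / \<alpha> + (\<Sum>k<K. frac ((\<beta> - d - 1) / \<alpha> + real k * (real d * - (1 / \<alpha>))))
                     - (\<Sum>k<K. frac ((\<beta> - d) / \<alpha> + real k * (real d * - (1 / \<alpha>))))"
  proof -
    have "g (Suc k) = 1 / \<alpha> + frac ((\<beta> - d - 1) / \<alpha> + real k * (real d * - (1 / \<alpha>)))
                     - frac ((\<beta> - d) / \<alpha> + real k * (real d * - (1 / \<alpha>)))" for k
    proof -
      have "(real (d * Suc k) + 1 - \<beta>) / \<alpha> - (real (d * Suc k) - \<beta>) / \<alpha> = 1 / \<alpha>"
        by (simp add: divide_simps)
      moreover have "- ((real (d * Suc k) + 1 - \<beta>) / \<alpha>) = (\<beta> - d - 1) / \<alpha> + real k * (real d * - (1 / \<alpha>))"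
           "- ((real (d * Suc k) - \<beta>) / \<alpha>) = (\<beta> - d) / \<alpha> + real k * (real d * - (1 / \<alpha>))"
        using \<alpha> by (simp_all add: field_simps)
      ultimately show ?thesis
        unfolding g_def of_int_ceiling_diff_eq_frac by (simp only:)
    qed
    then show ?thesis
      by (simp add: sum.atLeast1_atMost_eq sum_subtractf sum.distrib)
  qed
  moreover have "\<bar>(\<Sum>k\<in>{1..K}. of_bool (int (d * k) \<in> beatty \<alpha> \<beta>)) - (\<Sum>k\<in>{1..K}. g k)\<bar> \<le> \<bar>\<beta>\<bar>"
  proof -
    have "\<bar>(\<Sum>k\<in>{1..K}. of_bool (int (d * k) \<in> beatty \<alpha> \<beta>)) - (\<Sum>k\<in>{1..K}. g k)\<bar>
        \<le> (\<Sum>k\<in>{1..K}. of_bool (real k \<le> \<beta>))"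
      unfolding sum_subtractf[symmetric] using term_err by (intro order_trans[OF sum_abs] sum_mono) auto
    also have "\<dots> = real (card {k \<in> {1..K}. real k \<le> \<beta>})"
      by (simp add: Int_def)
    also have "\<dots> \<le> \<bar>\<beta>\<bar>"
      by (rule card_nat_le_real_bound)
    finally show ?thesis .
  qed
  ultimately show ?thesis
    by simp
qed

lemma beatty_multiples_discrepancy:
  fixes \<alpha> \<beta> c t :: real
  assumes \<alpha>: "\<alpha> > 1" and t: "t > 0" and c: "c > 0" and bound: "approx_lower_bound c t \<alpha>"
  obtains C where "\<And>d N. d \<ge> 1 \<Longrightarrow> N \<ge> 1 \<Longrightarrow>
    \<bar>real (card {n::nat. 1 \<le> n \<and> n \<le> N \<and> d dvd n \<and> int n \<in> beatty \<alpha> \<beta>}) - N / (\<alpha> * d)\<bar>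
      \<le> C * real N powr (t / (1 + t))"
proof -
  obtain c' where "c' > 0" "approx_lower_bound c' t (1 / \<alpha>)"
    using approx_lower_bound_inverse[OF _ _ c bound] \<alpha> t by auto
  from approx_lower_bound_uminus[OF this(2)] obtain C1 where C1:
    "\<And>d N K a. d \<ge> 1 \<Longrightarrow> N \<ge> 1 \<Longrightarrow> d * K \<le> N \<Longrightarrow>
       \<bar>(\<Sum>k<K. frac (a + real k * (real d * - (1 / \<alpha>)))) - K / 2\<bar> \<le> C1 * real N powr (t / (1 + t))"
    using sum_frac_multiple_progression_discrepancy[OF t \<open>c' > 0\<close>] by blast
  show thesis
  proof (rule that)
    fix d N :: nat
    assume d: "d \<ge> 1" and N: "N \<ge> 1"
    define K where "K = N div d"
    define E where "E = real N powr (t / (1 + t))"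
    have "E \<ge> 1"
      unfolding E_def using N t by (simp add: ge_one_powr_ge_zero)
    have "d * K \<le> N"
      by (simp add: K_def)
    have "\<bar>real K / \<alpha> - N / (\<alpha> * d)\<bar> \<le> 1"
    proof -
      have "N < d + d * K"
        using d by (simp add: K_def dividend_less_times_div)
      then have "real K \<le> N / d" "N / d < real K + 1"
        using d by (simp_all add: K_def of_nat_div_le_of_nat field_simps flip: of_nat_mult of_nat_add)
      then have "\<bar>real K - N / d\<bar> / \<alpha> \<le> 1"
        using \<alpha> by simp
      then show ?thesis
        using \<alpha> by (simp add: abs_div_pos diff_divide_distrib mult.commute)
    qed
    moreover have "\<bar>\<beta>\<bar> \<le> \<bar>\<beta>\<bar> * E" "C1 * E \<le> \<bar>C1\<bar> * E"
      using \<open>E \<ge> 1\<close> by (simp_all add: mult_right_mono mult_le_cancel_left1)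
    moreover define T1 where "T1 = (\<Sum>k<K. frac ((\<beta> - d) / \<alpha> + real k * (real d * - (1 / \<alpha>))))"
    moreover define T2 where "T2 = (\<Sum>k<K. frac ((\<beta> - d - 1) / \<alpha> + real k * (real d * - (1 / \<alpha>))))"
    moreover have "\<bar>T1 - K / 2\<bar> \<le> C1 * E" "\<bar>T2 - K / 2\<bar> \<le> C1 * E"
      unfolding T1_def T2_def E_def using C1 d N \<open>d * K \<le> N\<close> by blast+
    moreover have "\<bar>real (card {n::nat. 1 \<le> n \<and> n \<le> N \<and> d dvd n \<and> int n \<in> beatty \<alpha> \<beta>})
        - (K / \<alpha> + T2 - T1)\<bar> \<le> \<bar>\<beta>\<bar>"
      unfolding card_beatty_multiples[OF d] T1_def T2_def K_def
      using beatty_multiples_count_approx \<alpha> d by simp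
    ultimately have "\<bar>real (card {n::nat. 1 \<le> n \<and> n \<le> N \<and> d dvd n \<and> int n \<in> beatty \<alpha> \<beta>}) - N / (\<alpha> * d)\<bar>
      \<le> \<bar>\<beta>\<bar> * E + 2 * (\<bar>C1\<bar> * E) + E"
      using \<open>E \<ge> 1\<close> unfolding abs_le_iff by linarith
    then show "\<bar>real (card {n::nat. 1 \<le> n \<and> n \<le> N \<and> d dvd n \<and> int n \<in> beatty \<alpha> \<beta>}) - N / (\<alpha> * d)\<bar>
      \<le> (\<bar>\<beta>\<bar> + 2 * \<bar>C1\<bar> + 1) * real N powr (t / (1 + t))"
      by (simp add: E_def algebra_simps)
  qed
qed

theorem lemma4p6:
  fixes \<alpha> \<beta> \<tau> :: real
  assumes "\<alpha> > 1" and "\<alpha> \<notin> \<rat>" and "irr_type \<alpha> = ereal \<tau>"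
  shows "\<exists>\<epsilon>0>0. \<forall>\<epsilon>. 0 < \<epsilon> \<and> \<epsilon> < \<epsilon>0 \<longrightarrow>
           (\<exists>C::real. \<forall>d::nat. \<forall>N::nat. d \<ge> 1 \<longrightarrow> N \<ge> 1 \<longrightarrow>
              \<bar>real (card {n::nat. 1 \<le> n \<and> n \<le> N \<and> d dvd n \<and> int n \<in> beatty \<alpha> \<beta>})
                 - real N / (\<alpha> * real d)\<bar>
              \<le> C * real N powr (\<tau> / (1 + \<tau>) + \<epsilon>))"
proof -
  have "\<tau> \<ge> 0"
    using irr_type_nonneg[OF assms(2,3)] .
  have "\<exists>C::real. \<forall>d::nat. \<forall>N::nat. d \<ge> 1 \<longrightarrow> N \<ge> 1 \<longrightarrow>
          \<bar>real (card {n::nat. 1 \<le> n \<and> n \<le> N \<and> d dvd n \<and> int n \<in> beatty \<alpha> \<beta>}) - real N / (\<alpha> * real d)\<bar>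
          \<le> C * real N powr (\<tau> / (1 + \<tau>) + \<epsilon>)" if "\<epsilon> > 0" for \<epsilon>
  proof -
    define t where "t = \<tau> + \<epsilon>"
    have "t > 0" "\<tau> < t" "t / (1 + t) \<le> \<tau> / (1 + \<tau>) + \<epsilon>"
      using \<open>\<tau> \<ge> 0\<close> \<open>\<epsilon> > 0\<close> by (simp_all add: t_def field_simps)
    obtain c where "c > 0" "approx_lower_bound c t \<alpha>"
      using approx_lower_bound_of_irr_type[OF assms(2,3) \<open>\<tau> < t\<close>] by blast
    then obtain C where C: "\<And>d N. d \<ge> 1 \<Longrightarrow> N \<ge> 1 \<Longrightarrow>
        \<bar>real (card {n::nat. 1 \<le> n \<and> n \<le> N \<and> d dvd n \<and> int n \<in> beatty \<alpha> \<beta>}) - N / (\<alpha> * d)\<bar>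
          \<le> C * real N powr (t / (1 + t))"
      using beatty_multiples_discrepancy[OF assms(1) \<open>t > 0\<close>] by blast
    have "C * real N powr (t / (1 + t)) \<le> \<bar>C\<bar> * real N powr (\<tau> / (1 + \<tau>) + \<epsilon>)" if "N \<ge> 1" for N :: nat
      using that \<open>t / (1 + t) \<le> \<tau> / (1 + \<tau>) + \<epsilon>\<close>
      by (intro mult_mono powr_mono) auto
    with C show ?thesis
      by (meson order_trans)
  qed
  then show ?thesis
    by (intro exI[of _ 1]) auto
qed

end
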